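(* Let $q(m,n)=am^2+bmn+cn^2$ with $a,b,c\in\mathbb{Z}$ be a positive definite form ($\Delta=b^2-4ac<0$, $a>0$) and let $\lambda>0$. For $k\in\mathbb{Z}$ let $A_k=\{(m,n)\in(\mathbb{Z}\setminus\{0\})\times\mathbb{Z}: q(m,n)=k\}$. Then there is a constant $C_{\lambda,\Delta}$ depending only on $\lambda$ and $\Delta$ such that for every $k\in\mathbb{Z}$, $$\sum_{(m,n)\in A_k}\frac{1}{|m|^{\lambda}}\le C_{\lambda,\Delta}.$$ *)

theory Defs
  imports Complex_Main
begin

definition qform :: "int \<Rightarrow> int \<Rightarrow> int \<Rightarrow> int \<Rightarrow> int \<Rightarrow> int" where
  "qform a b c m n = a * m^2 + b * m * n + c * n^2"

definition repset :: "int \<Rightarrow> int \<Rightarrow> int \<Rightarrow> int \<Rightarrow> (int \<times> int) set" where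
  "repset a b c k = {(m, n). m \<noteq> 0 \<and> qform a b c m n = k}"

end

theory Submission
  imports Defs "HOL-Computational_Algebra.Primes"
begin

text \<open>
  Completing the square gives 4c q(m, n) = D m^2 + (2cn + bm)^2 with D = -\<Delta>, so it suffices
  to bound the sum of |m| powr -\<lambda> over the points with m \<noteq> 0 on the ellipse D m^2 + Y^2 = N,
  uniformly in N. Points with m^4 \<le> N have |Y| within D of \<surd>N, so there are at most
  4(D + 1) of them. Every other point contributes at most N powr (-\<lambda>/4), while the number of
  all points is at most 8 D d(N)^2: a primitive point (m, Y) determines a square root s = Y/m
  of -D modulo N, which in turn determines the point up to sign, and there are at most
  4 D d(N) such roots. The divisor bound d(N) = O(N powr (\<lambda>/8)) finishes the proof.
\<close>

section \<open>The divisor bound\<close>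

lemma card_divisors_prime_power:
  assumes "prime (p::nat)"
  shows "card {d. d dvd p ^ e} = Suc e"
proof -
  have "{d. d dvd p ^ e} = (\<lambda>i. p ^ i) ` {..e}"
    using divides_primepow_nat[OF assms] by auto
  moreover have "inj_on (\<lambda>i. p ^ i) {..e}"
    using assms prime_gt_1_nat by (auto intro!: inj_onI simp: power_inject_exp)
  ultimately show ?thesis by (simp add: card_image)
qed

lemma card_divisors_mult_le:
  assumes "(a::nat) > 0" "b > 0"
  shows "card {d. d dvd a * b} \<le> card {d. d dvd a} * card {d. d dvd b}"
proof -
  have "{d. d dvd a * b} \<subseteq> (\<lambda>(x, y). x * y) ` ({d. d dvd a} \<times> {d. d dvd b})"
    by (auto elim!: dvd_productE)
  then have "card {d. d dvd a * b} \<le> card ((\<lambda>(x, y). x * y) ` ({d. d dvd a} \<times> {d. d dvd b}))"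
    by (intro card_mono) (use assms in auto)
  also have "\<dots> \<le> card ({d. d dvd a} \<times> {d. d dvd b})"
    by (rule card_image_le) (use assms in auto)
  finally show ?thesis by (simp add: card_cartesian_product)
qed

lemma Suc_le_powr:
  fixes eps x :: real
  assumes "eps > 0" "x \<ge> 2"
  shows "real (Suc e) \<le> (1 + 1 / (eps * ln 2)) * x powr (real e * eps)"
proof -
  define a where "a = eps * ln 2"
  have a: "a > 0" using assms by (simp add: a_def)
  have "1 + real e * a \<le> exp (real e * a)" by (rule exp_ge_add_one_self)
  also have "\<dots> = 2 powr (real e * eps)" by (simp add: powr_def a_def algebra_simps)
  also have "\<dots> \<le> x powr (real e * eps)" using assms by (intro powr_mono2) auto
  finally have "1 + real e * a \<le> x powr (real e * eps)" .
  moreover have "real (Suc e) \<le> (1 + 1 / a) * (1 + real e * a)"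
    using a by (simp add: field_simps)
  ultimately show ?thesis
    using a by (simp add: a_def order.trans[OF _ mult_left_mono])
qed

lemma Suc_le_powr_of_powr_ge_2:
  fixes eps x :: real
  assumes "x > 0" "x powr eps \<ge> 2"
  shows "real (Suc e) \<le> x powr (real e * eps)"
proof -
  have "real (Suc e) \<le> 2 ^ e" by (induction e) auto
  also have "\<dots> \<le> (x powr eps) ^ e" using assms by (intro power_mono) auto
  also have "\<dots> = x powr (real e * eps)"
    using assms by (simp add: powr_powr[symmetric] powr_realpow mult.commute)
  finally show ?thesis .
qed

lemma card_prime_factors_less_mult_prime_power:
  fixes p m :: nat
  assumes "prime p" "\<not> p dvd m" "m > 0" "e > 0"
  shows "card {q \<in> prime_factors (p ^ e * m). q < P}
           = card {q \<in> prime_factors m. q < P} + (if p < P then 1 else 0)"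
proof -
  have pf: "prime_factors (p ^ e * m) = insert p (prime_factors m)"
    using assms by (simp add: prime_factors_product prime_factorization_prime_power)
  have "p \<notin> prime_factors m" using assms(2) by (auto simp: prime_factors_dvd)
  show ?thesis
  proof (cases "p < P")
    case True
    then have "{q \<in> prime_factors (p ^ e * m). q < P} = insert p {q \<in> prime_factors m. q < P}"
      unfolding pf by auto
    with True \<open>p \<notin> prime_factors m\<close> show ?thesis by simp
  next
    case False
    then have "{q \<in> prime_factors (p ^ e * m). q < P} = {q \<in> prime_factors m. q < P}"
      unfolding pf by auto
    with False show ?thesis by simp
  qed
qed

text \<open>
  A prime power p^e with p \<ge> P contributes e + 1 \<le> p powr (e \<cdot> eps) divisors, so only
  the primes below P cost an extra constant factor.
\<close>

lemma card_divisors_le_powr_aux: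
  fixes eps :: real and P :: nat
  assumes eps: "eps > 0"
    and P: "\<And>p. p \<ge> P \<Longrightarrow> 2 \<le> real p powr eps"
    and "n > 0"
  shows "real (card {d. d dvd n})
           \<le> (1 + 1 / (eps * ln 2)) ^ card {p \<in> prime_factors n. p < P} * real n powr eps"
  using \<open>n > 0\<close>
proof (induction n rule: less_induct)
  case (less n)
  define B where "B = 1 + 1 / (eps * ln 2)"
  show ?case
  proof (cases "n = 1")
    case True then show ?thesis by simp
  next
    case False
    then obtain p where p: "prime p" "p dvd n"
      using less.prems by (metis prime_factor_nat)
    define e where "e = multiplicity p n"
    have p1: "p > 1" using p prime_gt_1_nat by auto
    obtain m where nm: "n = p ^ e * m" and pm: "\<not> p dvd m"
      using multiplicity_decompose'[of n p] e_def less.prems p1 by auto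
    have m0: "m > 0" using nm less.prems by (cases "m = 0") auto
    have "e > 0" using p less.prems by (simp add: e_def prime_multiplicity_gt_zero_iff)
    with p1 have "p ^ e > 1" by (rule one_less_power)
    then have "m < n" using nm m0 by simp
    define k :: nat where "k = (if p < P then 1 else 0)"
    have local: "real (Suc e) \<le> B ^ k * real p powr (real e * eps)"
    proof (cases "p < P")
      case True then show ?thesis
        using Suc_le_powr[OF eps, of "real p" e] p1 by (simp add: k_def B_def)
    next
      case False then show ?thesis
        using Suc_le_powr_of_powr_ge_2[of "real p" eps e] P[of p] p1 by (simp add: k_def)
    qed
    have count: "card {q \<in> prime_factors m. q < P} + k = card {q \<in> prime_factors n. q < P}"
      using card_prime_factors_less_mult_prime_power[OF p(1) pm m0 \<open>e > 0\<close>] nm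
      by (simp add: k_def)
    have npow: "real n powr eps = real p powr (real e * eps) * real m powr eps"
      using nm p1 m0 by (simp add: powr_mult powr_realpow[symmetric] powr_powr mult.commute)
    have "real (card {d. d dvd n}) \<le> real (Suc e) * real (card {d. d dvd m})"
      using card_divisors_mult_le[of "p ^ e" m] card_divisors_prime_power[OF p(1), of e] m0 p1 nm
      by (metis of_nat_le_iff of_nat_mult zero_less_power less_trans zero_less_one)
    also have "\<dots> \<le> (B ^ k * real p powr (real e * eps))
                    * (B ^ card {q \<in> prime_factors m. q < P} * real m powr eps)"
      using local less.IH[OF \<open>m < n\<close> m0] by (intro mult_mono) (auto simp: B_def)
    also have "\<dots> = B ^ card {q \<in> prime_factors n. q < P} * real n powr eps"
      by (simp add: npow power_add flip: count)
    finally show ?thesis by (simp add: B_def)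
  qed
qed

lemma card_divisors_le_powr:
  fixes eps :: real
  assumes eps: "eps > 0"
  shows "\<exists>C. \<forall>n > 0. real (card {d. d dvd n}) \<le> C * real n powr eps"
proof -
  define B where "B = 1 + 1 / (eps * ln 2)"
  define P where "P = nat \<lceil>2 powr (1 / eps)\<rceil>"
  have B1: "B \<ge> 1" using eps by (simp add: B_def)
  have P: "2 \<le> real p powr eps" if "p \<ge> P" for p
  proof -
    have "2 powr (1 / eps) \<le> real p" using that unfolding P_def by linarith
    then have "(2 powr (1 / eps)) powr eps \<le> real p powr eps"
      using eps by (intro powr_mono2) auto
    then show ?thesis using eps by (simp add: powr_powr)
  qed
  have "real (card {d. d dvd n}) \<le> B ^ P * real n powr eps" if "n > 0" for n
  proof -
    have "card {p \<in> prime_factors n. p < P} \<le> P"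
      using card_mono[of "{..<P}" "{p \<in> prime_factors n. p < P}"] by auto
    then have "B ^ card {p \<in> prime_factors n. p < P} \<le> B ^ P"
      using B1 by (intro power_increasing)
    then show ?thesis
      using card_divisors_le_powr_aux[OF eps P that] unfolding B_def[symmetric]
      by (meson mult_right_mono order.trans powr_ge_zero)
  qed
  then show ?thesis by blast
qed

definition divisor_count :: "int \<Rightarrow> nat" where
  "divisor_count N = card {d. 0 < d \<and> d dvd N}"

lemma finite_pos_divisors: "N > 0 \<Longrightarrow> finite {d::int. 0 < d \<and> d dvd N}"
  by (rule finite_subset[of _ "{0..N}"]) (auto simp: zdvd_imp_le)

lemma divisor_count_mono: "0 < M \<Longrightarrow> M dvd N \<Longrightarrow> 0 < N \<Longrightarrow> divisor_count M \<le> divisor_count N"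
  unfolding divisor_count_def by (intro card_mono finite_pos_divisors) (auto intro: dvd_trans)

lemma divisor_count_eq_card_nat_divisors:
  assumes "N > 0"
  shows "divisor_count N = card {d. d dvd nat N}"
proof -
  have "{d. 0 < d \<and> d dvd N} = int ` {d. d dvd nat N}"
  proof (intro equalityI subsetI)
    fix d assume "d \<in> {d. 0 < d \<and> d dvd N}"
    with assms show "d \<in> int ` {d. d dvd nat N}"
      by (auto simp: image_iff nat_dvd_iff intro!: exI[of _ "nat d"])
  next
    fix d assume "d \<in> int ` {d. d dvd nat N}"
    then obtain e where "d = int e" "e dvd nat N" by auto
    moreover have "e \<noteq> 0" using \<open>e dvd nat N\<close> assms by (cases e) auto
    moreover have "int e dvd N" using \<open>e dvd nat N\<close> assms
      by (metis int_nat_eq less_imp_le of_nat_dvd_iff)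
    ultimately show "d \<in> {d. 0 < d \<and> d dvd N}" by simp
  qed
  then show ?thesis by (simp add: divisor_count_def card_image)
qed

lemma divisor_count_le_powr:
  fixes eps :: real
  assumes "eps > 0"
  shows "\<exists>C. \<forall>N > 0. real (divisor_count N) \<le> C * real_of_int N powr eps"
proof -
  obtain C where C: "\<forall>n > 0. real (card {d. d dvd n}) \<le> C * real n powr eps"
    using card_divisors_le_powr[OF assms] by blast
  have "real (divisor_count N) \<le> C * real_of_int N powr eps" if "N > 0" for N
  proof -
    have "real (card {d. d dvd nat N}) \<le> C * real (nat N) powr eps"
      using C[rule_format, of "nat N"] that by simp
    with that show ?thesis by (simp add: divisor_count_eq_card_nat_divisors)
  qed
  then show ?thesis by blast
qed

section \<open>Square roots of \<open>-D\<close> modulo \<open>M\<close>\<close>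

lemma div_gcd_dvd_of_dvd_mult:
  fixes M x y :: int
  assumes "M dvd x * y" "M > 0"
  shows "M div gcd x M dvd y"
proof -
  define g where "g = gcd x M"
  have g0: "g > 0" using assms by (simp add: g_def)
  obtain x' where x': "x = g * x'" unfolding g_def by (meson dvd_def gcd_dvd1)
  obtain M' where M': "M = g * M'" unfolding g_def by (meson dvd_def gcd_dvd2)
  have Mg: "M div g = M'" and "x div g = x'" using x' M' g0 by simp_all
  then have "coprime x' M'"
    using div_gcd_coprime[of x M] g0 unfolding g_def by auto
  moreover have "M' dvd x' * y"
    using assms(1) x' M' g0 by (simp add: mult.assoc)
  ultimately have "M' dvd y" by (simp add: coprime_commute coprime_dvd_mult_right_iff)
  then show ?thesis using Mg by (simp add: g_def)
qed

lemma card_congruent_le: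
  fixes L M r :: int
  assumes "L > 0" "L dvd M"
  shows "card {s. 0 \<le> s \<and> s < M \<and> s mod L = r} \<le> nat (M div L)"
proof -
  let ?S = "{s. 0 \<le> s \<and> s < M \<and> s mod L = r}"
  have "inj_on (\<lambda>s. s div L) ?S"
    by (rule inj_onI) (metis (mono_tags) mem_Collect_eq mult_div_mod_eq)
  moreover have "s div L < M div L" if "0 \<le> s" "s < M" for s
  proof -
    obtain K where K: "M = L * K" using assms(2) ..
    have "L * (s div L) + s mod L = s" by (rule mult_div_mod_eq)
    moreover have "s mod L \<ge> 0" using assms(1) by simp
    ultimately have "L * (s div L) < L * K" using that K by linarith
    then show ?thesis using assms(1) K by (simp add: mult_less_cancel_left_pos)
  qed
  then have "(\<lambda>s. s div L) ` ?S \<subseteq> {0..<M div L}"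
    using assms by (auto simp: pos_imp_zdiv_nonneg_iff)
  ultimately have "card ?S \<le> card {0..<M div L}"
    by (rule card_inj_on_le[OF _ _ finite_atLeastLessThan_int])
  then show ?thesis by simp
qed

definition sqrt_neg_mod :: "int \<Rightarrow> int \<Rightarrow> int set" where
  "sqrt_neg_mod D M = {s. 0 \<le> s \<and> s < M \<and> M dvd s^2 + D}"

lemma finite_sqrt_neg_mod: "finite (sqrt_neg_mod D M)"
  unfolding sqrt_neg_mod_def by (rule finite_subset[of _ "{0..<M}"]) auto

lemma sqrt_neg_mod_div_gcd_dvd:
  assumes "s \<in> sqrt_neg_mod D M" "t \<in> sqrt_neg_mod D M" "M > 0"
  shows "M div gcd (s - t) M dvd s + t"
proof -
  have "M dvd (s^2 + D) - (t^2 + D)" using assms unfolding sqrt_neg_mod_def by (intro dvd_diff) auto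
  then have "M dvd (s - t) * (s + t)" by (simp add: power2_eq_square algebra_simps)
  then show ?thesis using div_gcd_dvd_of_dvd_mult assms(3) by blast
qed

lemma gcd_complementary_divisor_dvd:
  fixes D M d s t :: int
  assumes "M dvd s^2 + D" "d dvd M" "d dvd s - t" "M div d dvd s + t"
  shows "gcd d (M div d) dvd 4 * D"
proof -
  define e where "e = gcd d (M div d)"
  have "e dvd (s - t) + (s + t)"
    using assms(3,4) unfolding e_def by (meson dvd_add dvd_trans gcd_dvd1 gcd_dvd2)
  then have "e dvd 2 * s" by simp
  then have "e dvd (2 * s) * (2 * s)" by (rule dvd_mult2)
  moreover have "e dvd 4 * (s^2 + D)"
    using assms(1,2) unfolding e_def by (meson dvd_mult dvd_trans gcd_dvd1)
  ultimately have "e dvd 4 * (s^2 + D) - (2 * s) * (2 * s)" by (rule dvd_diff[rotated])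
  then show ?thesis by (simp add: e_def power2_eq_square algebra_simps)
qed

text \<open>
  The roots in one fibre are congruent modulo L = lcm d (M div d), and there are
  M div L = gcd d (M div d) residues modulo L below M.
\<close>

lemma card_sqrt_neg_mod_gcd_fibre_le:
  assumes D: "D > 0" and s0: "s0 \<in> sqrt_neg_mod D M" and d: "d > 0" "d dvd M"
  shows "card {s \<in> sqrt_neg_mod D M. gcd (s - s0) M = d} \<le> nat (4 * D)"
proof (cases "{s \<in> sqrt_neg_mod D M. gcd (s - s0) M = d} = {}")
  case False
  let ?F = "{s \<in> sqrt_neg_mod D M. gcd (s - s0) M = d}"
  have M: "M > 0" using s0 unfolding sqrt_neg_mod_def by auto
  have fibre: "d dvd s - s0 \<and> M div d dvd s + s0" if "s \<in> ?F" for s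
    using that sqrt_neg_mod_div_gcd_dvd[OF _ s0 M, of s] by auto
  obtain s1 where s1: "s1 \<in> ?F" using False by auto
  define L where "L = lcm d (M div d)"
  have Mdpos: "M div d > 0" using d M by (simp add: pos_imp_zdiv_pos_iff zdvd_imp_le)
  then have L0: "L > 0" using d unfolding L_def by (simp add: lcm_pos_int)
  have gL: "gcd d (M div d) * L = M" unfolding L_def using d Mdpos by simp
  then have LM: "L dvd M" by (metis dvd_triv_right)
  have "?F \<subseteq> {s. 0 \<le> s \<and> s < M \<and> s mod L = s1 mod L}"
  proof
    fix s assume s: "s \<in> ?F"
    have "d dvd (s - s0) - (s1 - s0)"
      by (rule dvd_diff) (use fibre[OF s] fibre[OF s1] in auto)
    moreover have "M div d dvd (s + s0) - (s1 + s0)"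
      by (rule dvd_diff) (use fibre[OF s] fibre[OF s1] in auto)
    ultimately have "d dvd s - s1" "M div d dvd s - s1" by simp_all
    then have "L dvd s - s1" unfolding L_def by (rule lcm_least)
    then show "s \<in> {s. 0 \<le> s \<and> s < M \<and> s mod L = s1 mod L}"
      using s unfolding sqrt_neg_mod_def by (auto simp: mod_eq_dvd_iff)
  qed
  then have "card ?F \<le> card {s. 0 \<le> s \<and> s < M \<and> s mod L = s1 mod L}"
    by (rule card_mono[rotated]) (rule finite_subset[of _ "{0..<M}"], auto)
  also have "\<dots> \<le> nat (M div L)" by (rule card_congruent_le[OF L0 LM])
  also have "M div L = gcd d (M div d)" using gL L0 by (metis nonzero_mult_div_cancel_right less_irrefl)
  also have "\<dots> \<le> 4 * D"
  proof (rule zdvd_imp_le)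
    have "M dvd s1^2 + D" using s1 unfolding sqrt_neg_mod_def by simp
    then show "gcd d (M div d) dvd 4 * D"
      using d(2) fibre[OF s1] by (blast intro: gcd_complementary_divisor_dvd)
  qed (use D in simp)
  finally show ?thesis by simp
qed (metis card.empty zero_le)

lemma card_sqrt_neg_mod_le:
  fixes D M :: int
  assumes D: "D > 0" and M: "M > 0"
  shows "int (card (sqrt_neg_mod D M)) \<le> 4 * D * int (divisor_count M)"
proof (cases "sqrt_neg_mod D M = {}")
  case False
  then obtain s0 where s0: "s0 \<in> sqrt_neg_mod D M" by auto
  let ?Dv = "{d. 0 < d \<and> d dvd M}"
  let ?F = "\<lambda>d. {s \<in> sqrt_neg_mod D M. gcd (s - s0) M = d}"
  have "sqrt_neg_mod D M \<subseteq> (\<Union>d\<in>?Dv. ?F d)" using M by auto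
  then have "card (sqrt_neg_mod D M) \<le> card (\<Union>d\<in>?Dv. ?F d)"
    by (rule card_mono[rotated]) (auto intro: finite_subset[OF _ finite_sqrt_neg_mod])
  also have "\<dots> \<le> (\<Sum>d\<in>?Dv. card (?F d))" by (rule card_UN_le[OF finite_pos_divisors[OF M]])
  also have "\<dots> \<le> (\<Sum>d\<in>?Dv. nat (4 * D))"
    by (rule sum_mono) (use card_sqrt_neg_mod_gcd_fibre_le[OF D s0] in auto)
  finally have "card (sqrt_neg_mod D M) \<le> card ?Dv * nat (4 * D)" by simp
  then have "int (card (sqrt_neg_mod D M)) \<le> int (card ?Dv) * int (nat (4 * D))"
    by (metis of_nat_mono of_nat_mult)
  then show ?thesis using D by (simp add: divisor_count_def mult.commute)
qed (use D in simp)

section \<open>Points on the ellipse \<open>D m\<^sup>2 + Y\<^sup>2 = N\<close>\<close>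

definition prim_reps :: "int \<Rightarrow> int \<Rightarrow> (int \<times> int) set" where
  "prim_reps D M = {(m, Y). D * m^2 + Y^2 = M \<and> coprime m Y}"

definition reps :: "int \<Rightarrow> int \<Rightarrow> (int \<times> int) set" where
  "reps D N = {(m, Y). m \<noteq> 0 \<and> D * m^2 + Y^2 = N}"

lemma abs_le_square_int: "\<bar>x::int\<bar> \<le> x^2"
proof (cases "x = 0")
  case False
  then have "\<bar>x\<bar> * 1 \<le> \<bar>x\<bar> * \<bar>x\<bar>" by (intro mult_left_mono) auto
  then show ?thesis by (simp add: power2_eq_square abs_mult_self_eq)
qed simp

lemma finite_ellipse_points:
  assumes "D \<ge> 1"
  shows "finite {(m, Y). D * m^2 + Y^2 = (N::int)}"
proof -
  have "(m, Y) \<in> {-\<bar>N\<bar>..\<bar>N\<bar>} \<times> {-\<bar>N\<bar>..\<bar>N\<bar>}" if eq: "D * m^2 + Y^2 = N" for m Y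
  proof -
    have "m^2 \<le> D * m^2" using assms by (simp add: mult_le_cancel_right1)
    then have "m^2 \<le> N" "Y^2 \<le> N" using eq assms by (smt (verit) zero_le_power2)+
    then show ?thesis using abs_le_square_int[of m] abs_le_square_int[of Y] by auto
  qed
  then have "{(m, Y). D * m^2 + Y^2 = N} \<subseteq> {-\<bar>N\<bar>..\<bar>N\<bar>} \<times> {-\<bar>N\<bar>..\<bar>N\<bar>}"
    by blast
  then show ?thesis by (rule finite_subset) auto
qed

lemma finite_prim_reps: "D \<ge> 1 \<Longrightarrow> finite (prim_reps D M)"
  unfolding prim_reps_def by (rule finite_subset[OF _ finite_ellipse_points[of D M]]) auto

lemma finite_reps: "D \<ge> 1 \<Longrightarrow> finite (reps D N)"
  unfolding reps_def by (rule finite_subset[OF _ finite_ellipse_points[of D N]]) auto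

lemma coprime_cross_mult_eq:
  fixes m1 Y1 m2 Y2 :: int
  assumes c1: "coprime m1 Y1" and c2: "coprime m2 Y2" and e: "m1 * Y2 = m2 * Y1"
  shows "(m2, Y2) = (m1, Y1) \<or> (m2, Y2) = (-m1, -Y1)"
proof -
  have "m1 dvd m2 * Y1" "Y2 dvd m2 * Y1" by (simp_all flip: e)
  moreover have "m2 dvd m1 * Y2" "Y1 dvd m1 * Y2" by (simp_all add: e)
  moreover have "coprime Y1 m1" "coprime Y2 m2" using c1 c2 by (simp_all add: coprime_commute)
  ultimately have "m1 dvd m2" "m2 dvd m1" "Y1 dvd Y2" "Y2 dvd Y1"
    using c1 c2 by (simp_all only: coprime_dvd_mult_left_iff coprime_dvd_mult_right_iff)
  then have am: "\<bar>m1\<bar> = \<bar>m2\<bar>" and aY: "\<bar>Y1\<bar> = \<bar>Y2\<bar>"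
    by (blast intro: zdvd_antisym_abs)+
  show ?thesis
  proof (cases "m1 = 0")
    case True
    then show ?thesis using am aY by auto
  next
    case False
    from am consider "m2 = m1" | "m2 = -m1" by arith
    then show ?thesis
    proof cases
      case 1
      then show ?thesis using e False by simp
    next
      case 2
      then have "m1 * (Y2 + Y1) = 0" using e by (simp add: algebra_simps)
      then show ?thesis using 2 False by simp
    qed
  qed
qed

text \<open>The root is s = Y m^-1 mod M; coprimality of m and Y makes m invertible modulo M.\<close>

lemma prim_rep_root:
  assumes "(m, Y) \<in> prim_reps D M" "M > 0"
  shows "\<exists>s \<in> sqrt_neg_mod D M. M dvd Y - s * m"
proof -
  have eq: "D * m^2 + Y^2 = M" and cop: "coprime m Y" using assms unfolding prim_reps_def by auto
  have "M = (D * m) * m + Y^2" using eq by (simp add: power2_eq_square algebra_simps)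
  then have "gcd m M = gcd m (Y^2)" by (simp only: gcd_add_mult)
  moreover have "coprime m (Y^2)" using cop by simp
  ultimately have copM: "coprime m M" by (simp add: coprime_iff_gcd_eq_1)
  then obtain u v where uv: "u * m + v * M = 1" using bezout_int[of m M] by auto
  define s where "s = (Y * u) mod M"
  have "Y - s * m = Y * (1 - u * m) + M * ((Y * u) div M) * m"
    unfolding s_def by (simp add: minus_div_mult_eq_mod[symmetric] algebra_simps)
  also have "\<dots> = M * (Y * v + (Y * u) div M * m)"
    using uv by (simp add: algebra_simps flip: uv)
  finally have root: "M dvd Y - s * m" by (rule dvdI)
  have "m^2 * (s^2 + D) = (s * m - Y) * (s * m + Y) + M"
    by (simp add: power2_eq_square algebra_simps flip: eq)
  moreover have "M dvd (s * m - Y) * (s * m + Y)"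
    using root by (metis dvd_minus_iff dvd_mult2 minus_diff_eq)
  ultimately have "M dvd m^2 * (s^2 + D)" by (metis dvd_add_left_iff dvd_refl)
  then have "M dvd s^2 + D" using copM by (simp add: coprime_commute coprime_dvd_mult_right_iff)
  moreover have "0 \<le> s" "s < M" using assms(2) unfolding s_def by auto
  ultimately show ?thesis using root unfolding sqrt_neg_mod_def by auto
qed

text \<open>
  By Brahmagupta's identity M^2 = (D m1 m2 + Y1 Y2)^2 + D t^2 with t = m1 Y2 - m2 Y1, and
  M divides t, so t \<noteq> 0 would give D t^2 \<ge> 2 M^2.
\<close>

lemma prim_reps_same_root_cross_eq:
  assumes D: "D \<ge> 2" and M: "M > 0"
    and 1: "(m1, Y1) \<in> prim_reps D M" "M dvd Y1 - s * m1"
    and 2: "(m2, Y2) \<in> prim_reps D M" "M dvd Y2 - s * m2"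
  shows "m1 * Y2 = m2 * Y1"
proof (rule ccontr)
  define t where "t = m1 * Y2 - m2 * Y1"
  assume "m1 * Y2 \<noteq> m2 * Y1"
  then have "t \<noteq> 0" by (simp add: t_def)
  have "t = m1 * (Y2 - s * m2) - m2 * (Y1 - s * m1)" by (simp add: t_def algebra_simps)
  then have "M dvd t" using 1 2 by simp
  with \<open>t \<noteq> 0\<close> M have "\<bar>M\<bar> \<le> \<bar>t\<bar>" by (simp add: zdvd_imp_le dvd_abs_iff)
  then have "M^2 \<le> t^2" by (simp add: abs_le_square_iff)
  then have "2 * M^2 \<le> D * t^2" using D by (intro mult_mono) auto
  moreover have "(D * m1^2 + Y1^2) * (D * m2^2 + Y2^2) = (D * m1 * m2 + Y1 * Y2)^2 + D * t^2"
    by (simp add: t_def power2_eq_square algebra_simps)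
  then have "M^2 = (D * m1 * m2 + Y1 * Y2)^2 + D * t^2"
    using 1 2 unfolding prim_reps_def by (simp add: power2_eq_square)
  moreover have "M^2 > 0" "(D * m1 * m2 + Y1 * Y2)^2 \<ge> 0" using M by simp_all
  ultimately show False by linarith
qed

lemma card_prim_reps_same_root_le:
  assumes D: "D \<ge> 2" and M: "M > 0"
  shows "card {(m, Y) \<in> prim_reps D M. M dvd Y - s * m} \<le> 2"
proof (cases "{(m, Y) \<in> prim_reps D M. M dvd Y - s * m} = {}")
  case False
  then obtain m1 Y1 where 1: "(m1, Y1) \<in> prim_reps D M" "M dvd Y1 - s * m1" by auto
  have "(m2, Y2) \<in> {(m1, Y1), (-m1, -Y1)}"
    if 2: "(m2, Y2) \<in> prim_reps D M" "M dvd Y2 - s * m2" for m2 Y2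
  proof -
    have "m1 * Y2 = m2 * Y1" by (rule prim_reps_same_root_cross_eq[OF D M 1 2])
    then show ?thesis
      using coprime_cross_mult_eq[of m1 Y1 m2 Y2] 1 2 unfolding prim_reps_def by auto
  qed
  then have "card {(m, Y) \<in> prim_reps D M. M dvd Y - s * m} \<le> card {(m1, Y1), (-m1, -Y1)}"
    by (intro card_mono) auto
  also have "\<dots> \<le> 2" by (simp add: card_insert_if)
  finally show ?thesis .
qed (metis card.empty zero_le)

lemma card_prim_reps_le:
  fixes D M :: int
  assumes D: "D \<ge> 2" and M: "M > 0"
  shows "int (card (prim_reps D M)) \<le> 8 * D * int (divisor_count M)"
proof -
  let ?G = "\<lambda>s. {(m, Y) \<in> prim_reps D M. M dvd Y - s * m}"
  have "prim_reps D M \<subseteq> (\<Union>s \<in> sqrt_neg_mod D M. ?G s)"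
  proof clarify
    fix m Y assume mY: "(m, Y) \<in> prim_reps D M"
    with prim_rep_root[OF mY M] show "(m, Y) \<in> (\<Union>s \<in> sqrt_neg_mod D M. ?G s)" by blast
  qed
  then have "card (prim_reps D M) \<le> card (\<Union>s \<in> sqrt_neg_mod D M. ?G s)"
    using finite_prim_reps[of D M] D by (intro card_mono) (auto intro: finite_subset)
  also have "\<dots> \<le> (\<Sum>s \<in> sqrt_neg_mod D M. card (?G s))"
    by (rule card_UN_le[OF finite_sqrt_neg_mod])
  also have "\<dots> \<le> (\<Sum>s \<in> sqrt_neg_mod D M. 2)"
    by (rule sum_mono) (rule card_prim_reps_same_root_le[OF D M])
  finally have "int (card (prim_reps D M)) \<le> 2 * int (card (sqrt_neg_mod D M))" by simp
  also have "\<dots> \<le> 8 * D * int (divisor_count M)"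
    using card_sqrt_neg_mod_le[of D M] D M by simp
  finally show ?thesis .
qed

lemma reps_subset_scaled_prim_reps:
  "reps D N \<subseteq> (\<lambda>(g, u, v). (g * u, g * v)) ` (SIGMA g:{g. 0 < g \<and> g^2 dvd N}. prim_reps D (N div g^2))"
proof clarify
  fix m Y assume "(m, Y) \<in> reps D N"
  then have m0: "m \<noteq> 0" and eq: "D * m^2 + Y^2 = N" unfolding reps_def by auto
  define g where "g = gcd m Y"
  define u where "u = m div g"
  define v where "v = Y div g"
  have g0: "g > 0" using m0 by (simp add: g_def)
  have mu: "m = g * u" and Yv: "Y = g * v" by (simp_all add: u_def v_def g_def)
  have "coprime u v" unfolding u_def v_def g_def using div_gcd_coprime m0 by blast
  moreover have Neq: "N = g^2 * (D * u^2 + v^2)"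
    using eq mu Yv by (simp add: power2_eq_square algebra_simps)
  ultimately have "(g, u, v) \<in> (SIGMA g:{g. 0 < g \<and> g^2 dvd N}. prim_reps D (N div g^2))"
    using g0 by (simp add: prim_reps_def)
  then show "(m, Y) \<in> (\<lambda>(g, u, v). (g * u, g * v)) ` (SIGMA g:{g. 0 < g \<and> g^2 dvd N}. prim_reps D (N div g^2))"
    using mu Yv by force
qed

lemma card_reps_le:
  assumes D: "D \<ge> 2" and N: "N > 0"
  shows "int (card (reps D N)) \<le> 8 * D * int (divisor_count N)^2"
proof -
  let ?G = "{g. 0 < g \<and> g^2 dvd N}"
  have G_sub: "?G \<subseteq> {d. 0 < d \<and> d dvd N}"
    by (auto intro: dvd_trans[of _ "_^2"] simp: power2_eq_square)
  then have finG: "finite ?G" using finite_subset finite_pos_divisors[OF N] by blast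
  have cardG: "card ?G \<le> divisor_count N"
    unfolding divisor_count_def by (rule card_mono[OF finite_pos_divisors[OF N] G_sub])
  have fin_prim: "finite (prim_reps D M)" for M using finite_prim_reps D by simp
  have "card (reps D N) \<le> card (SIGMA g:?G. prim_reps D (N div g^2))"
    using reps_subset_scaled_prim_reps finG fin_prim
    by (meson card_image_le card_mono finite_SigmaI finite_imageI order_trans)
  also have "\<dots> = (\<Sum>g\<in>?G. card (prim_reps D (N div g^2)))"
    using finG fin_prim by (simp add: card_SigmaI)
  finally have "int (card (reps D N)) \<le> int (\<Sum>g\<in>?G. card (prim_reps D (N div g^2)))"
    by (rule of_nat_mono)
  also have "\<dots> = (\<Sum>g\<in>?G. int (card (prim_reps D (N div g^2))))"
    by (rule of_nat_sum)
  also have "\<dots> \<le> (\<Sum>g\<in>?G. 8 * D * int (divisor_count N))"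
  proof (rule sum_mono)
    fix g assume "g \<in> ?G"
    then obtain q where g: "g > 0" and Nq: "N = g^2 * q" by (auto elim: dvdE)
    then have q: "N div g^2 = q" "q > 0" "q dvd N" using N by (simp_all add: zero_less_mult_iff)
    have "int (card (prim_reps D q)) \<le> 8 * D * int (divisor_count q)"
      by (rule card_prim_reps_le[OF D \<open>q > 0\<close>])
    also have "\<dots> \<le> 8 * D * int (divisor_count N)"
      using divisor_count_mono[OF \<open>q > 0\<close> \<open>q dvd N\<close> N] D by simp
    finally show "int (card (prim_reps D (N div g^2))) \<le> 8 * D * int (divisor_count N)"
      by (simp add: q)
  qed
  also have "\<dots> \<le> int (divisor_count N) * (8 * D * int (divisor_count N))"
    using cardG D by (simp add: mult_right_mono)
  finally show ?thesis by (simp add: power2_eq_square algebra_simps)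
qed

lemma abs_near_sqrt_of_small_rep:
  fixes D m Y N :: int
  assumes D: "D \<ge> 0" and eq: "D * m^2 + Y^2 = N" and small: "m^4 \<le> N"
  shows "\<lfloor>sqrt N\<rfloor> - D \<le> \<bar>Y\<bar> \<and> \<bar>Y\<bar> \<le> \<lfloor>sqrt N\<rfloor>"
proof -
  define r where "r = sqrt N"
  define x where "x = real_of_int (m^2)"
  define y where "y = real_of_int \<bar>Y\<bar>"
  have "0 \<le> m^4" by simp
  then have "N \<ge> 0" using small by linarith
  then have r0: "r \<ge> 0" and rr: "r^2 = N" by (simp_all add: r_def)
  have Dx: "0 \<le> D * x" using D by (simp add: x_def)
  have Y2: "y^2 = r^2 - D * x"
    using arg_cong[OF eq, of real_of_int] unfolding rr x_def y_def by simp
  then have "y^2 \<le> r^2" using Dx by linarith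
  then have "y \<le> r" using r0 by (rule power2_le_imp_le)
  moreover have "r - D \<le> y"
  proof (cases "r \<le> D")
    case False
    have "x^2 \<le> r^2" using small unfolding rr x_def by (simp flip: power_mult)
    then have "x \<le> r" using r0 by (rule power2_le_imp_le)
    then have "D * x \<le> D * r" using D by (intro mult_left_mono) auto
    moreover have "real_of_int D * D \<le> D * r" using False D by (intro mult_left_mono) auto
    ultimately have "(r - D)^2 \<le> y^2" using Y2 by (simp add: power2_eq_square algebra_simps)
    then show ?thesis by (rule power2_le_imp_le) (simp add: y_def)
  qed (simp add: y_def)
  ultimately show ?thesis unfolding r_def y_def by (simp add: le_floor_iff) linarith
qed

lemma card_small_reps_le:
  assumes D: "D \<ge> 1"
  shows "card {p \<in> reps D N. fst p ^ 4 \<le> N} \<le> 4 * nat (D + 1)"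
proof -
  define F where "F = \<lfloor>sqrt N\<rfloor>"
  let ?S = "{p \<in> reps D N. fst p ^ 4 \<le> N}"
  let ?Ys = "{-F..-F+D} \<union> {F-D..F}"
  have "inj_on (\<lambda>(m, Y). (Y, m > 0)) ?S"
  proof (rule inj_onI)
    fix p q assume pq: "p \<in> ?S" "q \<in> ?S" "(\<lambda>(m, Y). (Y, m > 0)) p = (\<lambda>(m, Y). (Y, m > 0)) q"
    obtain m1 Y1 m2 Y2 where p: "p = (m1, Y1)" and q: "q = (m2, Y2)" by fastforce
    have Y: "Y1 = Y2" and sgn: "(m1 > 0) = (m2 > 0)" and "m1 \<noteq> 0" "m2 \<noteq> 0"
      and eq: "D * m1^2 + Y1^2 = N" "D * m2^2 + Y2^2 = N"
      using pq unfolding p q reps_def by auto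
    from eq have "D * m1^2 = D * m2^2" unfolding Y by linarith
    then have "m1^2 = m2^2" using D by simp
    then have "m1 = m2" using sgn \<open>m1 \<noteq> 0\<close> \<open>m2 \<noteq> 0\<close> by (auto simp: power2_eq_iff)
    then show "p = q" using p q Y by simp
  qed
  moreover have "(\<lambda>(m, Y). (Y, m > 0)) p \<in> ?Ys \<times> UNIV" if "p \<in> ?S" for p
  proof -
    obtain m Y where p: "p = (m, Y)" by fastforce
    have "F - D \<le> \<bar>Y\<bar> \<and> \<bar>Y\<bar> \<le> F"
      using that abs_near_sqrt_of_small_rep[of D m Y N] D unfolding p reps_def F_def by auto
    then show ?thesis unfolding p by (cases "Y \<ge> 0") auto
  qed
  then have "(\<lambda>(m, Y). (Y, m > 0)) ` ?S \<subseteq> ?Ys \<times> UNIV" by (rule image_subsetI)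
  ultimately have "card ?S \<le> card (?Ys \<times> (UNIV :: bool set))"
    by (rule card_inj_on_le) simp
  also have "\<dots> = card ?Ys * 2" by (simp add: card_cartesian_product)
  also have "\<dots> \<le> (card {-F..-F+D} + card {F-D..F}) * 2"
    by (intro mult_right_mono card_Un_le) simp
  finally show ?thesis using D by simp
qed

lemma sum_reps_weight_le:
  fixes lam :: real
  assumes D: "D \<ge> 1" and N: "N > 0" and lam: "lam > 0"
  shows "(\<Sum>(m, Y)\<in>reps D N. 1 / real_of_int \<bar>m\<bar> powr lam)
           \<le> card {p \<in> reps D N. fst p ^ 4 \<le> N} + card (reps D N) / real_of_int N powr (lam / 4)"
proof -
  define Q where "Q = real_of_int N powr (lam / 4)"
  have Q: "Q > 0" using N by (simp add: Q_def)
  have term_le: "1 / real_of_int \<bar>m\<bar> powr lam \<le> (if m ^ 4 \<le> N then 1 else 0) + 1 / Q"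
    if "m \<noteq> 0" for m
  proof (cases "m ^ 4 \<le> N")
    case True
    have "1 \<le> real_of_int \<bar>m\<bar> powr lam" using that lam by (simp add: ge_one_powr_ge_zero)
    then have "1 / real_of_int \<bar>m\<bar> powr lam \<le> 1" by (simp add: divide_le_eq_1)
    moreover have "0 < 1 / Q" using Q by simp
    ultimately show ?thesis by (simp only: if_P[OF True])
  next
    case False
    have "Q \<le> real_of_int (m ^ 4) powr (lam / 4)"
      unfolding Q_def using False N lam by (intro powr_mono2) auto
    also have "real_of_int (m ^ 4) = real_of_int \<bar>m\<bar> powr 4"
      using that by (simp add: powr_numeral power_even_abs_numeral)
    also have "\<dots> powr (lam / 4) = real_of_int \<bar>m\<bar> powr lam"
      by (simp only: powr_powr) simp
    finally show ?thesis using False Q by (simp add: frac_le)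
  qed
  have "(\<Sum>(m, Y)\<in>reps D N. 1 / real_of_int \<bar>m\<bar> powr lam)
               \<le> (\<Sum>p\<in>reps D N. (if fst p ^ 4 \<le> N then 1 else 0) + 1 / Q)"
  proof (rule sum_mono)
    fix p assume "p \<in> reps D N"
    then obtain m Y where "p = (m, Y)" "m \<noteq> 0" unfolding reps_def by blast
    then show "(case p of (m, Y) \<Rightarrow> 1 / real_of_int \<bar>m\<bar> powr lam)
                 \<le> (if fst p ^ 4 \<le> N then 1 else 0) + 1 / Q"
      using term_le[of m] by simp
  qed
  also have "\<dots> = card {p \<in> reps D N. fst p ^ 4 \<le> N} + card (reps D N) / Q"
    using finite_reps[OF D] by (simp add: sum.distrib sum.inter_filter[symmetric])
  finally show ?thesis by (simp add: Q_def)
qed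

lemma reps_nonpos:
  assumes "D > 0" "N \<le> 0"
  shows "reps D N = {}"
proof -
  have pos: "D * m^2 + Y^2 > 0" if "m \<noteq> 0" for m Y :: int
    using assms(1) that by (simp add: add_pos_nonneg)
  have "(m, Y) \<notin> reps D N" for m Y
    using pos[of m Y] assms(2) unfolding reps_def by auto
  then show ?thesis by auto
qed

lemma sum_reps_weight_bounded:
  fixes lam :: real
  assumes D: "D \<ge> 2" and lam: "lam > 0"
  shows "\<exists>C. \<forall>N. (\<Sum>(m, Y)\<in>reps D N. 1 / real_of_int \<bar>m\<bar> powr lam) \<le> C"
proof -
  obtain Cd where Cd: "\<And>N. N > 0 \<Longrightarrow> real (divisor_count N) \<le> Cd * real_of_int N powr (lam / 8)"
    using divisor_count_le_powr[of "lam / 8"] lam by auto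
  define C where "C = 4 * real_of_int (D + 1) + 8 * real_of_int D * Cd^2"
  have "(\<Sum>(m, Y)\<in>reps D N. 1 / real_of_int \<bar>m\<bar> powr lam) \<le> C" for N
  proof (cases "N > 0")
    case False
    then show ?thesis using D by (simp add: reps_nonpos C_def)
  next
    case N: True
    define Q where "Q = real_of_int N powr (lam / 4)"
    have Q: "Q > 0" using N by (simp add: Q_def)
    have "real (card {p \<in> reps D N. fst p ^ 4 \<le> N}) \<le> 4 * real_of_int (D + 1)"
      using card_small_reps_le[of D N] D by (simp add: of_nat_mono)
    moreover have "real (card (reps D N)) / Q \<le> 8 * real_of_int D * Cd^2"
    proof -
      have "real (divisor_count N)^2 \<le> (Cd * real_of_int N powr (lam / 8))^2"
        using Cd[OF N] by (intro power_mono) auto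
      also have "\<dots> = Cd^2 * Q"
        by (simp add: Q_def power_mult_distrib power2_eq_square flip: powr_add)
      finally have dQ: "real (divisor_count N)^2 \<le> Cd^2 * Q" .
      have "real_of_int (int (card (reps D N))) \<le> real_of_int (8 * D * int (divisor_count N)^2)"
        using card_reps_le[OF D N] by (simp only: of_int_le_iff)
      then have "real (card (reps D N)) \<le> 8 * real_of_int D * real (divisor_count N)^2" by simp
      also have "\<dots> \<le> 8 * real_of_int D * (Cd^2 * Q)" using dQ D by (intro mult_left_mono) auto
      finally have "real (card (reps D N)) \<le> 8 * real_of_int D * (Cd^2 * Q)" .
      then show ?thesis using Q by (simp add: divide_le_eq mult.assoc)
    qed
    ultimately show ?thesis
      using sum_reps_weight_le[of D N lam] D N lam unfolding C_def Q_def by linarith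
  qed
  then show ?thesis by blast
qed

section \<open>Binary quadratic forms\<close>

lemma discriminant_neq_minus_one: "(b::int)^2 - 4 * a * c \<noteq> -1"
proof
  assume "b^2 - 4 * a * c = -1"
  then have "b^2 + 1 = 4 * (a * c)" using mult.assoc[of 4 a c] by linarith
  then have "(b^2 mod 4 + 1) mod 4 = 0" by (simp add: mod_add_left_eq)
  moreover have "b^2 mod 4 \<in> {0, 1}"
  proof (cases "even b")
    case True
    then obtain t where "b = 2 * t" ..
    then have "b^2 = 4 * t^2" by (simp add: power2_eq_square)
    then show ?thesis by simp
  next
    case False
    then obtain t where "b = 2 * t + 1" ..
    then have "b^2 = 1 + (t^2 + t) * 4" by (simp add: power2_eq_square algebra_simps)
    then have "b^2 mod 4 = 1 mod 4" by (simp only: mod_mult_self1)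
    then show ?thesis by simp
  qed
  ultimately show False by auto
qed

lemma sum_repset_le_sum_reps:
  fixes a b c k :: int and lam :: real
  assumes a: "a > 0" and D: "4 * a * c - b^2 \<ge> 1"
  shows "finite (repset a b c k) \<and>
           (\<Sum>(m, n)\<in>repset a b c k. 1 / real_of_int \<bar>m\<bar> powr lam)
             \<le> (\<Sum>(m, Y)\<in>reps (4 * a * c - b^2) (4 * c * k). 1 / real_of_int \<bar>m\<bar> powr lam)"
proof -
  let ?\<phi> = "\<lambda>(m, n). (m, 2 * c * n + b * m)"
  have "4 * a * c > 0" using D by (smt (verit) zero_le_power2)
  then have c: "c > 0" using a by (simp add: zero_less_mult_iff)
  have inj: "inj_on ?\<phi> (repset a b c k)"
    by (rule inj_onI) (use c in auto)
  have "(4 * a * c - b^2) * m^2 + (2 * c * n + b * m)^2 = 4 * c * qform a b c m n" for m n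
    by (simp add: qform_def power2_eq_square algebra_simps)
  then have img: "?\<phi> ` repset a b c k \<subseteq> reps (4 * a * c - b^2) (4 * c * k)"
    by (auto simp: repset_def reps_def)
  have fin: "finite (reps (4 * a * c - b^2) (4 * c * k))" using finite_reps D by simp
  have "finite (repset a b c k)"
    using finite_imageD[OF finite_subset[OF img fin] inj] .
  have "(\<Sum>(m, n)\<in>repset a b c k. 1 / real_of_int \<bar>m\<bar> powr lam)
          = (\<Sum>(m, Y)\<in>?\<phi> ` repset a b c k. 1 / real_of_int \<bar>m\<bar> powr lam)"
    by (rule sum.reindex_cong[OF inj refl, symmetric]) auto
  also have "\<dots> \<le> (\<Sum>(m, Y)\<in>reps (4 * a * c - b^2) (4 * c * k). 1 / real_of_int \<bar>m\<bar> powr lam)"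
    by (rule sum_mono2[OF fin img]) auto
  finally show ?thesis using \<open>finite (repset a b c k)\<close> by blast
qed

theorem mainTheorem6:
  fixes lam :: real and \<Delta> :: int
  assumes "lam > 0" and "\<Delta> < 0"
  shows "\<exists>C::real. \<forall>a b c k :: int. a > 0 \<and> b^2 - 4*a*c = \<Delta> \<longrightarrow>
           finite (repset a b c k) \<and>
           (\<Sum>(m, n)\<in>repset a b c k. 1 / (real_of_int \<bar>m\<bar> powr lam)) \<le> C"
proof (cases "\<Delta> = -1")
  case True
  \<comment> \<open>Vacuous; excluding D = 1 matters because the count of primitive points needs D \<ge> 2.\<close>
  then show ?thesis using discriminant_neq_minus_one by blast
next
  case False
  then have D: "-\<Delta> \<ge> 2" using assms(2) by linarith
  then obtain C where C: "\<forall>N. (\<Sum>(m, Y)\<in>reps (-\<Delta>) N. 1 / real_of_int \<bar>m\<bar> powr lam) \<le> C"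
    using sum_reps_weight_bounded assms(1) by blast
  have "finite (repset a b c k) \<and> (\<Sum>(m, n)\<in>repset a b c k. 1 / real_of_int \<bar>m\<bar> powr lam) \<le> C"
    if "a > 0" "b^2 - 4 * a * c = \<Delta>" for a b c k
  proof -
    have disc: "4 * a * c - b^2 = -\<Delta>" using that(2) by simp
    then show ?thesis
      using sum_repset_le_sum_reps[OF that(1), of c b k lam] C[rule_format, of "4 * c * k"] D
      unfolding disc by auto
  qed
  then show ?thesis by blast
qed

end
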